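(* Let $M$ be a smooth manifold and $(\mathbf{J}_1^t,\mathbf{J}_2^t)$ a canonical family of generalized Kähler structures, with associated bihermitian data $(g_t,b_t,I_t,J_t)$. Then for all $t$, $I^t\equiv I^0$ and $\sigma^t\equiv\sigma^0$, where $\sigma^t=\tfrac12[I_t,J_t]g_t^{-1}$.
   Context: A generalized Kähler structure is a pair of commuting integrable generalized complex structures $(\mathbf{J}_1,\mathbf{J}_2)$ on $T\oplus T^*$ (with $H$-twisted Courant bracket and neutral pairing $\langle X+\xi,Y+\eta\rangle=\tfrac12(\xi(Y)+\eta(X))$) with $\langle -\mathbf{J}_1\mathbf{J}_2\cdot,\cdot\rangle>0$; it corresponds to bihermitian data $(g,b,I,J)$ via the Gualtieri map $\mathbf{J}_{1/2}=\tfrac12 e^b\begin{pmatrix} I\pm J & -(\omega_I^{-1}\mp\omega_J^{-1})\\ \omega_I\mp\omega_J & -(I^*\pm J^* )\end{pmatrix}e^{-b}$, $\omega_I=gI$, $\omega_J=gJ$ as maps $T\to T^*$. For a 2-form $K$, $e^K(X+\xi)=X+\xi+K(X,\cdot)$ and $\Phi_K(\mathbf{J})=[\mathbf{J},e^K\mathbf{J}]$. A canonical family is a one-parameter family of generalized Kähler structures with $\partial_t\mathbf{J}_i^t=\Phi_{K_t}(\mathbf{J}_i^t)$, $i=1,2$, for some family of real 2-forms $K_t$. The tensor $\sigma=\tfrac12[I,J]g^{-1}$ is a bivector (map $T^*\to T$). *)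

theory Defs
  imports "HOL-Analysis.Analysis"
begin

text \<open>Pointwise (fibrewise) linear algebra on the generalized tangent space
  T + T* of an n-dimensional manifold, with T trivialised as real^'n and T* identified
  with real^'n via the dual basis.  An endomorphism of T + T* is a 2x2 block operator
  (A, B, C, D) = [[A, B], [C, D]] with A : T -> T, B : T* -> T, C : T -> T*, D : T* -> T*.
  A map T -> T* (metric g, 2-form b, omega = g I) is a matrix M with M *v X = M(X, .).
  The dual I^* : T* -> T* of I : T -> T is transpose I.\<close>

type_synonym 'n gend = "(real^'n^'n) \<times> (real^'n^'n) \<times> (real^'n^'n) \<times> (real^'n^'n)"

definition gmult :: "('n::finite) gend \<Rightarrow> 'n gend \<Rightarrow> 'n gend" where
  "gmult P Q = (case P of (A, B, C, D) \<Rightarrow> (case Q of (A', B', C', D') \<Rightarrow>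
     (A ** A' + B ** C', A ** B' + B ** D', C ** A' + D ** C', C ** B' + D ** D')))"

definition gid :: "('n::finite) gend" where
  "gid = (mat 1, 0, 0, mat 1)"

definition gapp :: "('n::finite) gend \<Rightarrow> (real^'n) \<times> (real^'n) \<Rightarrow> (real^'n) \<times> (real^'n)" where
  "gapp P u = (case P of (A, B, C, D) \<Rightarrow> (case u of (X, \<xi>) \<Rightarrow>
     (A *v X + B *v \<xi>, C *v X + D *v \<xi>)))"

definition pairing :: "(real^'n) \<times> (real^'n) \<Rightarrow> (real^'n) \<times> (real^'n) \<Rightarrow> real" where
  "pairing u v = (case u of (X, \<xi>) \<Rightarrow> (case v of (Y, \<eta>) \<Rightarrow> (\<xi> \<bullet> Y + \<eta> \<bullet> X) / 2))"

definition eB :: "real^'n^'n \<Rightarrow> ('n::finite) gend" where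
  "eB K = (mat 1, 0, K, mat 1)"

definition Phi :: "real^'n^'n \<Rightarrow> ('n::finite) gend \<Rightarrow> 'n gend" where
  "Phi K JJ = gmult JJ (gmult (eB K) JJ) - gmult (gmult (eB K) JJ) JJ"

definition skew_form :: "real^'n^'n \<Rightarrow> bool" where
  "skew_form K \<longleftrightarrow> transpose K = - K"

definition gen_almost_complex :: "('n::finite) gend \<Rightarrow> bool" where
  "gen_almost_complex JJ \<longleftrightarrow> gmult JJ JJ = - gid \<and>
     (\<forall>u v. pairing (gapp JJ u) (gapp JJ v) = pairing u v)"

definition gen_almost_kahler :: "('n::finite) gend \<Rightarrow> 'n gend \<Rightarrow> bool" where
  "gen_almost_kahler J1 J2 \<longleftrightarrow> gen_almost_complex J1 \<and> gen_almost_complex J2 \<and>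
     gmult J1 J2 = gmult J2 J1 \<and>
     (\<forall>u. u \<noteq> 0 \<longrightarrow> pairing (gapp (- gmult J1 J2) u) u > 0)"

definition bihermitian :: "real^'n^'n \<Rightarrow> real^'n^'n \<Rightarrow> real^'n^'n \<Rightarrow> real^'n^'n \<Rightarrow> bool" where
  "bihermitian g b I J \<longleftrightarrow>
     transpose g = g \<and> (\<forall>v. v \<noteq> 0 \<longrightarrow> v \<bullet> (g *v v) > 0) \<and> skew_form b \<and>
     I ** I = - mat 1 \<and> J ** J = - mat 1 \<and>
     transpose I ** g ** I = g \<and> transpose J ** g ** J = g"

text \<open>Gualtieri map; s = 1 gives J_1, s = -1 gives J_2.\<close>
definition gualtieri :: "real \<Rightarrow> real^'n^'n \<Rightarrow> real^'n^'n \<Rightarrow> real^'n^'n \<Rightarrow> real^'n^'n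
    \<Rightarrow> ('n::finite) gend" where
  "gualtieri s g b I J =
     (1/2) *\<^sub>R gmult (eB b)
       (gmult (I + s *\<^sub>R J,
               - (matrix_inv (g ** I) - s *\<^sub>R matrix_inv (g ** J)),
               g ** I - s *\<^sub>R (g ** J),
               - (transpose I + s *\<^sub>R transpose J))
         (eB (- b)))"

definition sigma :: "real^'n^'n \<Rightarrow> real^'n^'n \<Rightarrow> real^'n^'n \<Rightarrow> real^'n^'n" where
  "sigma I J g = (1/2) *\<^sub>R ((I ** J - J ** I) ** matrix_inv g)"

end

theory Submission
  imports Defs
begin

text \<open>The T^* \<rightarrow> T blocks of the Gualtieri structures are B_1 = (I - J) g^-1 / 2 and
  B_2 = (I + J) g^-1 / 2, and that of J_1 J_2 is -g^-1.  Along a canonical family each block of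
  J_i evolves by B' = B K B, and the block of J_1 J_2 by the product rule; differentiating
  J_1 J_2 = J_2 J_1 then shows that J commutes with g^-1 K.  With this, I = (B_1 + B_2) g and
  sigma = (I W + W I^*) / 2, where W = B_2 - B_1 = J g^-1, have vanishing derivative, so both are
  constant on the interval.\<close>

lemma matrix_add_rdistrib: "((A::'a::semiring_1^'n^'m) + B) ** (C::'a^'p^'n) = A ** C + B ** C"
  by (simp add: matrix_matrix_mult_def vec_eq_iff sum.distrib distrib_right)

lemma matrix_diff_rdistrib: "((A::'a::ring_1^'n^'m) - B) ** (C::'a^'p^'n) = A ** C - B ** C"
  by (simp add: matrix_matrix_mult_def vec_eq_iff sum_subtractf left_diff_distrib)

lemma matrix_diff_ldistrib: "(A::'a::ring_1^'n^'m) ** (B - C) = A ** B - A ** (C::'a^'p^'n)"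
  by (simp add: matrix_matrix_mult_def vec_eq_iff sum_subtractf right_diff_distrib)

lemma matrix_neg_left: "(- (A::'a::ring_1^'n^'m)) ** (B::'a^'p^'n) = - (A ** B)"
  by (simp add: matrix_matrix_mult_def vec_eq_iff sum_negf)

lemma matrix_neg_right: "(A::'a::ring_1^'n^'m) ** (- (B::'a^'p^'n)) = - (A ** B)"
  by (simp add: matrix_matrix_mult_def vec_eq_iff sum_negf)

lemma matrix_scaleR_left:
  "(c *\<^sub>R (A::'a::real_algebra_1^'n^'m)) ** (B::'a^'p^'n) = c *\<^sub>R (A ** B)"
  by (simp add: scalar_matrix_assoc)

lemma matrix_scaleR_right:
  "(A::'a::real_algebra_1^'n^'m) ** (c *\<^sub>R (B::'a^'p^'n)) = c *\<^sub>R (A ** B)"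
  by (simp add: matrix_scalar_ac scalar_matrix_assoc)

text \<open>Normalising with algebra_simps produces entrywise products X * 2 on matrices.\<close>
lemma vec_times_numeral_eq_scaleR: "(A::real^'n^'m) * numeral w = (numeral w :: real) *\<^sub>R A"
  by (simp add: vec_eq_iff)

lemma numeral_times_vec_eq_scaleR: "numeral w * (A::real^'n^'m) = (numeral w :: real) *\<^sub>R A"
  by (simp add: vec_eq_iff)

lemmas matrix_ring_simps = vec_times_numeral_eq_scaleR numeral_times_vec_eq_scaleR
  matrix_add_ldistrib matrix_add_rdistrib
  matrix_diff_ldistrib matrix_diff_rdistrib matrix_neg_left matrix_neg_right
  matrix_scaleR_left matrix_scaleR_right matrix_mul_assoc[symmetric]

lemma bounded_bilinear_matrix_mult:
  "bounded_bilinear (\<lambda>(A::real^'n::finite^'m::finite) (B::real^'p::finite^'n). A ** B)"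
  by (rule bilinear_conv_bounded_bilinear[THEN iffD1])
    (auto simp: bilinear_def linear_iff matrix_ring_simps)

lemma matrix_inv_inverse:
  fixes A :: "'a::semiring_1^'n^'m"
  assumes "invertible A"
  shows matrix_inv_right: "A ** matrix_inv A = mat 1"
    and matrix_inv_left: "matrix_inv A ** A = mat 1"
proof -
  have "A ** matrix_inv A = mat 1 \<and> matrix_inv A ** A = mat 1"
    unfolding matrix_inv_def by (rule someI_ex) (use assms in \<open>simp add: invertible_def\<close>)
  then show "A ** matrix_inv A = mat 1" "matrix_inv A ** A = mat 1" by blast+
qed

lemma matrix_inv_cancel:
  fixes A :: "'a::semiring_1^'n^'m"
  assumes "invertible A"
  shows matrix_inv_cancel_left: "matrix_inv A ** (A ** X) = X"
    and matrix_inv_cancel_right: "A ** (matrix_inv A ** Y) = Y"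
  by (simp_all add: matrix_mul_assoc matrix_inv_left matrix_inv_right assms)

lemma matrix_inv_unique:
  fixes A :: "'a::field^'n^'n"
  assumes "A ** X = mat 1"
  shows "matrix_inv A = X"
proof -
  have "X ** A = mat 1" using assms matrix_left_right_inverse by blast
  then have "invertible A" using assms invertible_def by blast
  then have "X ** (A ** matrix_inv A) = X" by (simp add: matrix_inv_right)
  then show ?thesis by (simp add: matrix_mul_assoc \<open>X ** A = mat 1\<close>)
qed

lemma invertible_matrix_inv:
  "invertible (A::'a::semiring_1^'n^'m) \<Longrightarrow> invertible (matrix_inv A)"
  using matrix_inv_left matrix_inv_right invertible_def by blast

lemma matrix_inv_matrix_inv:
  "invertible (A::'a::field^'n^'n) \<Longrightarrow> matrix_inv (matrix_inv A) = A"
  by (simp add: matrix_inv_left matrix_inv_unique)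

definition cramer_inverse :: "real^'n::finite^'n \<Rightarrow> real^'n^'n" where
  "cramer_inverse A =
    (\<chi> i j. det (\<chi> r c. if c = i then (if r = j then 1 else 0) else A $ r $ c) / det A)"

lemma matrix_inv_eq_cramer_inverse:
  fixes A :: "real^'n::finite^'n"
  assumes "invertible A"
  shows "matrix_inv A = cramer_inverse A"
proof (subst vec_eq_iff, intro allI, subst vec_eq_iff, intro allI)
  fix i j
  have "det A \<noteq> 0" using assms invertible_det_nz by blast
  define x where "x = (\<chi> k. matrix_inv A $ k $ j)"
  have "A *v x = (\<chi> r. (A ** matrix_inv A) $ r $ j)"
    by (simp add: x_def matrix_vector_mult_def matrix_matrix_mult_def)
  also have "\<dots> = (\<chi> r. if r = j then 1 else 0)"
    by (simp add: matrix_inv_right[OF assms] mat_def)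
  finally have "x $ i = cramer_inverse A $ i $ j"
    using cramer[OF \<open>det A \<noteq> 0\<close>] by (simp add: cramer_inverse_def cong del: if_weak_cong)
  then show "matrix_inv A $ i $ j = cramer_inverse A $ i $ j"
    by (simp add: x_def)
qed

lemma tendsto_cramer_inverse:
  fixes Q :: "'a \<Rightarrow> real^'n::finite^'n"
  assumes "(Q \<longlongrightarrow> L) F" and "det L \<noteq> 0"
  shows "((\<lambda>s. cramer_inverse (Q s)) \<longlongrightarrow> cramer_inverse L) F"
proof -
  have det: "((\<lambda>s. det (f s)) \<longlongrightarrow> det M) F" if "(f \<longlongrightarrow> M) F" for f and M :: "real^'n^'n"
    unfolding det_def by (intro tendsto_intros that)
  show ?thesis
    unfolding cramer_inverse_def by (intro tendsto_intros det assms) (auto intro!: tendsto_intros assms)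
qed

lemma tendsto_matrix_inv:
  fixes Q :: "'a \<Rightarrow> real^'n::finite^'n"
  assumes "(Q \<longlongrightarrow> L) F" "invertible L" "eventually (\<lambda>s. invertible (Q s)) F"
  shows "((\<lambda>s. matrix_inv (Q s)) \<longlongrightarrow> matrix_inv L) F"
proof -
  have "((\<lambda>s. cramer_inverse (Q s)) \<longlongrightarrow> matrix_inv L) F"
    using tendsto_cramer_inverse[OF assms(1)] assms(2)
    by (simp add: invertible_det_nz matrix_inv_eq_cramer_inverse)
  then show ?thesis
    by (rule Lim_transform_eventually)
      (use assms(3) in \<open>auto elim: eventually_mono simp: matrix_inv_eq_cramer_inverse\<close>)
qed

lemma has_vector_derivative_matrix_mult_vanishing:
  fixes F D :: "real \<Rightarrow> real^'n::finite^'n"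
  assumes F: "(F \<longlongrightarrow> F t) (at t within T)"
    and D: "(D has_vector_derivative D') (at t within T)"
    and "D t = 0"
  shows "((\<lambda>s. F s ** D s) has_vector_derivative (F t ** D')) (at t within T)"
proof -
  define e where "e s = (1 / norm (s - t)) *\<^sub>R (D s - (D t + (s - t) *\<^sub>R D'))" for s
  have e: "(e \<longlongrightarrow> 0) (at t within T)"
    using D unfolding has_vector_derivative_def has_derivative_within e_def by blast
  have quotient: "(1 / norm (s - t)) *\<^sub>R (F s ** D s - (F t ** D t + (s - t) *\<^sub>R (F t ** D')))
      = F s ** e s + ((s - t) / norm (s - t)) *\<^sub>R ((F s - F t) ** D')" for s
    by (simp add: e_def \<open>D t = 0\<close> matrix_ring_simps scaleR_diff_right)
  have "((\<lambda>s. F s ** e s) \<longlongrightarrow> F t ** 0) (at t within T)"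
    by (rule bounded_bilinear.tendsto[OF bounded_bilinear_matrix_mult F e])
  moreover have
    "((\<lambda>s. ((s - t) / norm (s - t)) *\<^sub>R ((F s - F t) ** D')) \<longlongrightarrow> 0) (at t within T)"
  proof (rule Lim_null_comparison)
    show "\<forall>\<^sub>F s in at t within T.
        norm (((s - t) / norm (s - t)) *\<^sub>R ((F s - F t) ** D')) \<le> norm ((F s - F t) ** D')"
      by (intro always_eventually allI) (simp add: divide_le_eq_1)
    have "((\<lambda>s. (F s - F t) ** D') \<longlongrightarrow> (F t - F t) ** D') (at t within T)"
      by (intro bounded_bilinear.tendsto[OF bounded_bilinear_matrix_mult] tendsto_intros F)
    then show "((\<lambda>s. norm ((F s - F t) ** D')) \<longlongrightarrow> 0) (at t within T)"
      using tendsto_norm by fastforce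
  qed
  ultimately show ?thesis
    unfolding has_vector_derivative_def has_derivative_within quotient
    using tendsto_add bounded_linear_scaleR_left by fastforce
qed

lemma has_vector_derivative_matrix_inv:
  fixes Q :: "real \<Rightarrow> real^'n::finite^'n"
  assumes Q: "(Q has_vector_derivative Q') (at t within T)" and "t \<in> T"
    and inv: "\<And>s. s \<in> T \<Longrightarrow> invertible (Q s)"
  shows "((\<lambda>s. matrix_inv (Q s)) has_vector_derivative
      - (matrix_inv (Q t) ** (Q' ** matrix_inv (Q t)))) (at t within T)"
proof -
  let ?G = "\<lambda>s. matrix_inv (Q s)"
  have "(Q \<longlongrightarrow> Q t) (at t within T)"
    using has_vector_derivative_continuous[OF Q] by (simp add: continuous_within)
  then have G: "(?G \<longlongrightarrow> ?G t) (at t within T)"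
    by (rule tendsto_matrix_inv)
      (use inv \<open>t \<in> T\<close> in \<open>auto simp: eventually_at_filter\<close>)
  have "((\<lambda>s. (Q s - Q t) ** ?G t) has_vector_derivative (Q' ** ?G t)) (at t within T)"
    using bounded_bilinear.has_vector_derivative[OF bounded_bilinear_matrix_mult
        has_vector_derivative_diff[OF Q has_vector_derivative_const] has_vector_derivative_const]
    by simp
  then have "((\<lambda>s. ?G t - ?G s ** ((Q s - Q t) ** ?G t)) has_vector_derivative
      - (?G t ** (Q' ** ?G t))) (at t within T)"
    using has_vector_derivative_diff[OF has_vector_derivative_const
        has_vector_derivative_matrix_mult_vanishing[OF G]] by simp
  moreover have "?G s = ?G t - ?G s ** ((Q s - Q t) ** ?G t)" if "s \<in> T" for s
  proof -
    have "?G s ** ((Q s - Q t) ** ?G t) = ?G s ** (Q s ** ?G t) - ?G s ** (Q t ** ?G t)"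
      by (simp add: matrix_diff_ldistrib matrix_diff_rdistrib)
    also have "\<dots> = ?G t - ?G s"
      using matrix_inv_right[OF inv[OF \<open>t \<in> T\<close>]]
      by (simp add: matrix_inv_cancel_left[OF inv[OF that]])
    finally show ?thesis by simp
  qed
  ultimately show ?thesis
    by (rule has_vector_derivative_transform[OF \<open>t \<in> T\<close>, rotated])
qed

lemma bounded_bilinear_gmult: "bounded_bilinear (gmult :: ('n::finite) gend \<Rightarrow> _)"
  by (rule bilinear_conv_bounded_bilinear[THEN iffD1])
    (auto simp: bilinear_def linear_iff gmult_def matrix_ring_simps scaleR_add_right
      split: prod.splits)

definition ur_block :: "('n::finite) gend \<Rightarrow> real^'n^'n" where
  "ur_block P = fst (snd P)"

lemma ur_block_blocks [simp]: "ur_block (A, B, C, D) = B"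
  by (simp add: ur_block_def)

lemma bounded_linear_ur_block: "bounded_linear (ur_block :: ('n::finite) gend \<Rightarrow> _)"
  unfolding ur_block_def by (intro bounded_linear_compose[OF bounded_linear_fst] bounded_linear_snd)

lemma ur_block_gmult:
  "ur_block (gmult P Q) = fst P ** ur_block Q + ur_block P ** snd (snd (snd Q))"
  by (cases P; cases Q) (simp add: ur_block_def gmult_def)

lemma ur_block_add: "ur_block (P + Q) = ur_block P + ur_block Q"
  by (simp add: ur_block_def)

lemma ul_block_Phi: "fst (Phi K (A, B, C, D)) = B ** (K ** A)"
  by (simp add: Phi_def gmult_def eB_def matrix_ring_simps)

lemma ur_block_Phi: "ur_block (Phi K P) = ur_block P ** (K ** ur_block P)"
  by (cases P) (simp add: Phi_def gmult_def eB_def matrix_ring_simps)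

lemma square_minus_id_blocks:
  "gmult (A, B, C, D) (A, B, C, D) = - gid \<Longrightarrow> A ** B + B ** D = 0"
  by (simp add: gmult_def gid_def)

lemma lr_block_Phi:
  assumes "A ** B + B ** D = 0"
  shows "snd (snd (snd (Phi K (A, B, C, D)))) = D ** (K ** B)"
proof -
  have "K ** (A ** B + B ** D) = 0" using assms by simp
  then show ?thesis by (simp add: Phi_def gmult_def eB_def matrix_ring_simps algebra_simps)
qed

lemma ur_block_Phi_product:
  assumes "gmult P P = - gid" and "gmult Q Q = - gid"
  shows "ur_block (gmult P (Phi K Q) + gmult (Phi K P) Q)
    = ur_block P ** (K ** ur_block (gmult P Q)) + ur_block (gmult P Q) ** (K ** ur_block Q)"
proof -
  obtain A B C D A' B' C' D' where P: "P = (A, B, C, D)" and Q: "Q = (A', B', C', D')"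
    by (cases P, cases Q) auto
  have "A ** B + B ** D = 0" "A' ** B' + B' ** D' = 0"
    using assms by (simp_all add: P Q square_minus_id_blocks)
  then show ?thesis
    by (simp add: P Q ur_block_add ur_block_gmult ul_block_Phi ur_block_Phi lr_block_Phi
        matrix_ring_simps)
qed

lemma bihermitian_invertible:
  assumes "bihermitian g b I J"
  shows "invertible g"
proof -
  have "\<forall>v. g *v v = 0 \<longrightarrow> v = 0"
    using assms unfolding bihermitian_def by (metis inner_zero_right less_irrefl)
  then show ?thesis
    using matrix_left_invertible_ker invertible_left_inverse by blast
qed

lemma matrix_mult_complex_structure_twice:
  "(I::'a::ring_1^'n^'n) ** I = - mat 1 \<Longrightarrow> I ** (I ** X) = - X"
  by (simp add: matrix_mul_assoc matrix_neg_left)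

lemma hermitian_inverse_rules:
  fixes g I :: "real^'n::finite^'n"
  assumes g: "invertible g" and I: "I ** I = - mat 1" and "transpose I ** g ** I = g"
  shows "matrix_inv (g ** I) = - (I ** matrix_inv g)"
    and "matrix_inv g ** transpose I = - (I ** matrix_inv g)"
proof -
  show "matrix_inv (g ** I) = - (I ** matrix_inv g)"
    by (rule matrix_inv_unique)
      (simp add: matrix_neg_right matrix_mul_assoc[symmetric]
        matrix_mult_complex_structure_twice[OF I] matrix_inv_right[OF g])
  have "- (transpose I ** g) = transpose I ** g ** I ** I"
    by (simp add: matrix_mul_assoc[symmetric] I matrix_neg_right)
  also have "\<dots> = g ** I" using assms(3) by simp
  finally have "transpose I ** g = - (g ** I)" by (simp add: minus_equation_iff)
  have "matrix_inv g ** transpose I = matrix_inv g ** (transpose I ** g) ** matrix_inv g"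
    by (simp add: matrix_mul_assoc[symmetric] matrix_inv_right[OF g])
  also have "\<dots> = - (I ** matrix_inv g)"
    using \<open>transpose I ** g = - (g ** I)\<close>
    by (simp add: matrix_neg_left matrix_neg_right matrix_mul_assoc[symmetric]
        matrix_inv_cancel_left[OF g])
  finally show "matrix_inv g ** transpose I = - (I ** matrix_inv g)" .
qed

lemma bihermitian_inverse_rules:
  assumes "bihermitian g b I J"
  shows "matrix_inv (g ** I) = - (I ** matrix_inv g)" "matrix_inv (g ** J) = - (J ** matrix_inv g)"
    "matrix_inv g ** transpose I = - (I ** matrix_inv g)"
    "matrix_inv g ** transpose J = - (J ** matrix_inv g)"
    "matrix_inv g ** (transpose I ** X) = - (I ** (matrix_inv g ** X))"
    "matrix_inv g ** (transpose J ** X) = - (J ** (matrix_inv g ** X))"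
  using hermitian_inverse_rules[OF bihermitian_invertible[OF assms]] assms
  by (auto simp: bihermitian_def matrix_mul_assoc matrix_neg_left)

lemma gualtieri_blocks:
  "gualtieri s g b I J =
    (let A = I + s *\<^sub>R J; B = - (matrix_inv (g ** I) - s *\<^sub>R matrix_inv (g ** J));
         C = g ** I - s *\<^sub>R (g ** J); D = - (transpose I + s *\<^sub>R transpose J) in
     ((1/2) *\<^sub>R (A - B ** b), (1/2) *\<^sub>R B, (1/2) *\<^sub>R (b ** (A - B ** b) + C - D ** b),
      (1/2) *\<^sub>R (b ** B + D)))"
  by (simp add: gualtieri_def gmult_def eB_def Let_def matrix_ring_simps algebra_simps)

lemma ur_block_gualtieri:
  assumes "bihermitian g b I J"
  shows "ur_block (gualtieri s g b I J) = (1/2) *\<^sub>R ((I - s *\<^sub>R J) ** matrix_inv g)"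
  using bihermitian_inverse_rules[OF assms]
  by (simp add: gualtieri_blocks Let_def matrix_ring_simps algebra_simps)

lemma ur_block_gualtieri_product:
  assumes "bihermitian g b I J" and "s * s = 1"
  shows "ur_block (gmult (gualtieri s g b I J) (gualtieri (-s) g b I J)) = - matrix_inv g"
proof -
  have "I ** I = - mat 1" "J ** J = - mat 1" using assms unfolding bihermitian_def by auto
  then show ?thesis
    using bihermitian_inverse_rules[OF assms(1)] assms(2)
    by (simp add: ur_block_gmult gualtieri_blocks Let_def
        matrix_ring_simps matrix_mult_complex_structure_twice algebra_simps; simp add: vec_eq_iff)
qed

lemma sigma_bihermitian:
  assumes "bihermitian g b I J"
  shows "sigma I J g
    = (1/2) *\<^sub>R (I ** (J ** matrix_inv g) + (J ** matrix_inv g) ** transpose I)"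
  using bihermitian_inverse_rules[OF assms]
  by (simp add: sigma_def matrix_ring_simps algebra_simps)

lemma has_vector_derivative_ur_block_Phi:
  "(J has_vector_derivative Phi K (J t)) F \<Longrightarrow>
    ((\<lambda>s. ur_block (J s)) has_vector_derivative ur_block (J t) ** (K ** ur_block (J t))) F"
  using bounded_linear.has_vector_derivative[OF bounded_linear_ur_block]
  by (fastforce simp: ur_block_Phi)

lemma has_vector_derivative_ur_block_gmult_Phi:
  assumes J1: "(J1 has_vector_derivative Phi K (J1 t)) (at t within T)"
    and J2: "(J2 has_vector_derivative Phi K (J2 t)) (at t within T)"
    and "gmult (J1 t) (J1 t) = - gid" "gmult (J2 t) (J2 t) = - gid"
  shows "((\<lambda>s. ur_block (gmult (J1 s) (J2 s))) has_vector_derivative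
      ur_block (J1 t) ** (K ** ur_block (gmult (J1 t) (J2 t)))
      + ur_block (gmult (J1 t) (J2 t)) ** (K ** ur_block (J2 t))) (at t within T)"
  using bounded_linear.has_vector_derivative[OF bounded_linear_ur_block
      bounded_bilinear.has_vector_derivative[OF bounded_bilinear_gmult J1 J2]]
  by (simp add: ur_block_Phi_product assms(3,4))

lemma ur_block_Phi_commuting:
  assumes "at t within T \<noteq> bot" and "t \<in> T"
    and commute: "\<And>s. s \<in> T \<Longrightarrow> gmult (J1 s) (J2 s) = gmult (J2 s) (J1 s)"
    and J1: "(J1 has_vector_derivative Phi K (J1 t)) (at t within T)"
    and J2: "(J2 has_vector_derivative Phi K (J2 t)) (at t within T)"
    and "gmult (J1 t) (J1 t) = - gid" "gmult (J2 t) (J2 t) = - gid"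
  defines "N \<equiv> ur_block (gmult (J1 t) (J2 t))"
  shows "ur_block (J1 t) ** (K ** N) + N ** (K ** ur_block (J2 t))
    = ur_block (J2 t) ** (K ** N) + N ** (K ** ur_block (J1 t))"
proof -
  have "((\<lambda>s. ur_block (gmult (J1 s) (J2 s))) has_vector_derivative
      ur_block (J2 t) ** (K ** N) + N ** (K ** ur_block (J1 t))) (at t within T)"
    using has_vector_derivative_transform[OF \<open>t \<in> T\<close> _
        has_vector_derivative_ur_block_gmult_Phi[OF J2 J1 assms(7,6)]]
    by (simp add: N_def commute \<open>t \<in> T\<close>)
  with has_vector_derivative_ur_block_gmult_Phi[OF J1 J2 assms(6,7)] show ?thesis
    unfolding N_def by (rule vector_derivative_unique_within[OF assms(1)])
qed

lemma gualtieri_flow_commutes: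
  fixes g b I J K :: "real^'n::finite^'n"
  assumes bh: "bihermitian g b I J"
  defines "gi \<equiv> matrix_inv g"
  defines "B1 \<equiv> (1/2) *\<^sub>R ((I - J) ** gi)" and "B2 \<equiv> (1/2) *\<^sub>R ((I + J) ** gi)"
  assumes "B1 ** (K ** - gi) + - gi ** (K ** B2) = B2 ** (K ** - gi) + - gi ** (K ** B1)"
  shows "J ** (gi ** K) = gi ** (K ** J)"
proof -
  have "J ** (gi ** (K ** gi)) = gi ** (K ** (J ** gi))"
    using assms(5) by (simp add: B1_def B2_def matrix_ring_simps algebra_simps)
  then have "J ** (gi ** (K ** gi)) ** g = gi ** (K ** (J ** gi)) ** g" by simp
  then show ?thesis
    using matrix_inv_left[OF bihermitian_invertible[OF bh]]
    by (simp add: gi_def matrix_ring_simps)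
qed

text \<open>These are the derivatives of I = (B_1 + B_2) g and of (I W + W I^*) / 2, W = B_2 - B_1,
  when B_i' = B_i K B_i and (g^-1)' = B_1 K g^-1 + g^-1 K B_2.\<close>
lemma gualtieri_flow_stationary:
  fixes g b I J K :: "real^'n::finite^'n"
  assumes bh: "bihermitian g b I J"
  defines "gi \<equiv> matrix_inv g"
  defines "B1 \<equiv> (1/2) *\<^sub>R ((I - J) ** gi)" and "B2 \<equiv> (1/2) *\<^sub>R ((I + J) ** gi)"
  assumes "J ** (gi ** K) = gi ** (K ** J)"
  shows "(B1 + B2) ** (g ** ((B1 ** (K ** - gi) + - gi ** (K ** B2)) ** g))
      + (B1 ** (K ** B1) + B2 ** (K ** B2)) ** g = 0"
    and "I ** (B2 ** (K ** B2) - B1 ** (K ** B1))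
      + (B2 ** (K ** B2) - B1 ** (K ** B1)) ** transpose I = 0"
proof -
  have inv: "invertible g" by (rule bihermitian_invertible[OF bh])
  have II: "I ** I = - mat 1" and JJ: "J ** J = - mat 1" using bh unfolding bihermitian_def by auto
  have commute: "gi ** (K ** (J ** X)) = J ** (gi ** (K ** X))" for X :: "real^'n^'n"
    by (metis assms(5) matrix_mul_assoc)
  note inverse_rules = bihermitian_inverse_rules[OF bh] matrix_inv_left[OF inv]
    matrix_inv_right[OF inv] matrix_inv_cancel[OF inv]
  note rules = inverse_rules[folded gi_def] matrix_ring_simps II JJ commute
    matrix_mult_complex_structure_twice[OF II] matrix_mult_complex_structure_twice[OF JJ]
  show "(B1 + B2) ** (g ** ((B1 ** (K ** - gi) + - gi ** (K ** B2)) ** g))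
      + (B1 ** (K ** B1) + B2 ** (K ** B2)) ** g = 0"
    unfolding B1_def B2_def by (simp add: rules algebra_simps)
  show "I ** (B2 ** (K ** B2) - B1 ** (K ** B1))
      + (B2 ** (K ** B2) - B1 ** (K ** B1)) ** transpose I = 0"
    unfolding B1_def B2_def by (simp add: rules algebra_simps)
qed

lemma constant_if_stationary:
  fixes f :: "real \<Rightarrow> 'a::real_normed_vector"
  assumes "is_interval T"
    and "\<And>u. u \<in> T \<Longrightarrow> (f has_vector_derivative 0) (at u within T)"
    and "s \<in> T" "t \<in> T"
  shows "f s = f t"
  using has_vector_derivative_zero_constant[OF is_interval_convex[OF assms(1)] assms(2)] assms(3,4)
  by metis

locale canonical_family =
  fixes T :: "real set" and J1 J2 :: "real \<Rightarrow> ('n::finite) gend"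
    and g b I J K :: "real \<Rightarrow> real^'n^'n"
  assumes gen_almost_kahler: "s \<in> T \<Longrightarrow> gen_almost_kahler (J1 s) (J2 s)"
    and bihermitian: "s \<in> T \<Longrightarrow> bihermitian (g s) (b s) (I s) (J s)"
    and J1_gualtieri: "s \<in> T \<Longrightarrow> J1 s = gualtieri 1 (g s) (b s) (I s) (J s)"
    and J2_gualtieri: "s \<in> T \<Longrightarrow> J2 s = gualtieri (-1) (g s) (b s) (I s) (J s)"
    and J1_flow: "s \<in> T \<Longrightarrow> (J1 has_vector_derivative Phi (K s) (J1 s)) (at s within T)"
    and J2_flow: "s \<in> T \<Longrightarrow> (J2 has_vector_derivative Phi (K s) (J2 s)) (at s within T)"
begin

definition B1 :: "real \<Rightarrow> real^'n^'n" where "B1 s = ur_block (J1 s)"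
definition B2 :: "real \<Rightarrow> real^'n^'n" where "B2 s = ur_block (J2 s)"
definition B12 :: "real \<Rightarrow> real^'n^'n" where "B12 s = ur_block (gmult (J1 s) (J2 s))"

lemma squares:
  assumes "s \<in> T"
  shows "gmult (J1 s) (J1 s) = - gid" "gmult (J2 s) (J2 s) = - gid"
  using gen_almost_kahler[OF assms] unfolding gen_almost_kahler_def gen_almost_complex_def by blast+

lemma blocks:
  assumes "s \<in> T"
  shows "B1 s = (1/2) *\<^sub>R ((I s - J s) ** matrix_inv (g s))"
    and "B2 s = (1/2) *\<^sub>R ((I s + J s) ** matrix_inv (g s))"
    and "B12 s = - matrix_inv (g s)"
  using ur_block_gualtieri[OF bihermitian[OF assms], of 1]
    ur_block_gualtieri[OF bihermitian[OF assms], of "-1"]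
    ur_block_gualtieri_product[OF bihermitian[OF assms], of 1]
  by (simp_all add: B1_def B2_def B12_def J1_gualtieri[OF assms] J2_gualtieri[OF assms])

lemma B1_flow:
  "u \<in> T \<Longrightarrow> (B1 has_vector_derivative B1 u ** (K u ** B1 u)) (at u within T)"
  unfolding B1_def[abs_def] by (rule has_vector_derivative_ur_block_Phi[OF J1_flow])

lemma B2_flow:
  "u \<in> T \<Longrightarrow> (B2 has_vector_derivative B2 u ** (K u ** B2 u)) (at u within T)"
  unfolding B2_def[abs_def] by (rule has_vector_derivative_ur_block_Phi[OF J2_flow])

lemma B12_flow: "u \<in> T \<Longrightarrow>
    (B12 has_vector_derivative B1 u ** (K u ** B12 u) + B12 u ** (K u ** B2 u)) (at u within T)"
  unfolding B12_def[abs_def] B1_def B2_def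
  by (rule has_vector_derivative_ur_block_gmult_Phi[OF J1_flow J2_flow squares])

lemma J_commutes:
  assumes "u \<in> T" "at u within T \<noteq> bot"
  shows "J u ** (matrix_inv (g u) ** K u) = matrix_inv (g u) ** (K u ** J u)"
proof -
  have "B1 u ** (K u ** B12 u) + B12 u ** (K u ** B2 u)
      = B2 u ** (K u ** B12 u) + B12 u ** (K u ** B1 u)"
    unfolding B1_def B2_def B12_def
    by (rule ur_block_Phi_commuting[OF assms(2,1) _ J1_flow J2_flow squares])
      (use gen_almost_kahler assms in \<open>auto simp: gen_almost_kahler_def\<close>)
  then show ?thesis
    by (intro gualtieri_flow_commutes[OF bihermitian[OF assms(1)]]) (simp add: blocks[OF assms(1)])
qed

lemma g_flow:
  assumes "u \<in> T"
  shows "(g has_vector_derivative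
      g u ** ((B1 u ** (K u ** B12 u) + B12 u ** (K u ** B2 u)) ** g u)) (at u within T)"
proof -
  have invertible: "invertible (- B12 s)" if "s \<in> T" for s
    using invertible_matrix_inv[OF bihermitian_invertible[OF bihermitian[OF that]]]
    by (simp add: blocks(3)[OF that])
  have g: "g s = matrix_inv (- B12 s)" if "s \<in> T" for s
    using matrix_inv_matrix_inv[OF bihermitian_invertible[OF bihermitian[OF that]]]
    by (simp add: blocks(3)[OF that])
  have "((\<lambda>s. matrix_inv (- B12 s)) has_vector_derivative
      g u ** ((B1 u ** (K u ** B12 u) + B12 u ** (K u ** B2 u)) ** g u)) (at u within T)"
    using has_vector_derivative_matrix_inv[OF has_vector_derivative_minus[OF B12_flow[OF assms]]
        assms invertible]
    by (simp add: g[OF assms, symmetric] matrix_neg_left matrix_neg_right matrix_diff_ldistrib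
        matrix_diff_rdistrib matrix_add_ldistrib matrix_add_rdistrib add.commute)
  then show ?thesis
    by (rule has_vector_derivative_transform[OF assms, rotated]) (simp add: g)
qed

lemma I_stationary:
  assumes "u \<in> T"
  shows "(I has_vector_derivative 0) (at u within T)"
proof (cases "at u within T = bot")
  case True
  then show ?thesis by (simp add: has_vector_derivative_def has_derivative_def)
next
  case False
  have "((\<lambda>s. (B1 s + B2 s) ** g s) has_vector_derivative 0) (at u within T)"
    using bounded_bilinear.has_vector_derivative[OF bounded_bilinear_matrix_mult
        has_vector_derivative_add[OF B1_flow B2_flow] g_flow, OF assms assms assms]
      gualtieri_flow_stationary(1)[OF bihermitian[OF assms] J_commutes[OF assms False]]
    by (simp add: blocks[OF assms])
  moreover have "I s = (B1 s + B2 s) ** g s" if "s \<in> T" for s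
    using matrix_inv_left[OF bihermitian_invertible[OF bihermitian[OF that]]]
    by (simp add: blocks[OF that] matrix_ring_simps scaleR_diff_right scaleR_add_right)
  ultimately show ?thesis
    by (rule has_vector_derivative_transform[OF assms, rotated])
qed

lemma sigma_stationary:
  assumes "is_interval T" "u \<in> T"
  shows "((\<lambda>s. sigma (I s) (J s) (g s)) has_vector_derivative 0) (at u within T)"
proof (cases "at u within T = bot")
  case True
  then show ?thesis by (simp add: has_vector_derivative_def has_derivative_def)
next
  case False
  define L where "L X = (1/2) *\<^sub>R (I u ** X + X ** transpose (I u))" for X :: "real^'n^'n"
  have "bounded_linear L"
    unfolding L_def
    by (intro bounded_linear_compose[OF bounded_linear_scaleR_right] bounded_linear_add
        bounded_bilinear.bounded_linear_right[OF bounded_bilinear_matrix_mult]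
        bounded_bilinear.bounded_linear_left[OF bounded_bilinear_matrix_mult])
  from bounded_linear.has_vector_derivative[OF this
      has_vector_derivative_diff[OF B2_flow B1_flow, OF assms(2) assms(2)]]
  have "((\<lambda>s. L (B2 s - B1 s)) has_vector_derivative 0) (at u within T)"
    using gualtieri_flow_stationary(2)[OF bihermitian[OF assms(2)] J_commutes[OF assms(2) False]]
    by (simp add: L_def blocks[OF assms(2)] assms(2))
  moreover have "sigma (I s) (J s) (g s) = L (B2 s - B1 s)" if "s \<in> T" for s
    using sigma_bihermitian[OF bihermitian[OF that]]
      constant_if_stationary[OF assms(1) I_stationary that assms(2)]
    by (simp add: L_def blocks[OF that] matrix_ring_simps scaleR_diff_right scaleR_add_right)
  ultimately show ?thesis
    by (rule has_vector_derivative_transform[OF assms(2), rotated])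
qed

end

theorem corollary1p3:
  fixes J1 J2 :: "'m \<Rightarrow> real \<Rightarrow> ('n::finite) gend"
    and g b I J K :: "'m \<Rightarrow> real \<Rightarrow> real^'n^'n"
    and T :: "real set"
  assumes "is_interval T" and "0 \<in> T"
    and "\<forall>x. \<forall>t\<in>T. gen_almost_kahler (J1 x t) (J2 x t)"
    and "\<forall>x. \<forall>t\<in>T. bihermitian (g x t) (b x t) (I x t) (J x t)"
    and "\<forall>x. \<forall>t\<in>T. J1 x t = gualtieri 1 (g x t) (b x t) (I x t) (J x t)
                    \<and> J2 x t = gualtieri (-1) (g x t) (b x t) (I x t) (J x t)"
    and "\<forall>x. \<forall>t\<in>T. skew_form (K x t)"
    and "\<forall>x. \<forall>t\<in>T. ((\<lambda>s. J1 x s) has_vector_derivative Phi (K x t) (J1 x t)) (at t within T)"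
    and "\<forall>x. \<forall>t\<in>T. ((\<lambda>s. J2 x s) has_vector_derivative Phi (K x t) (J2 x t)) (at t within T)"
  shows "\<forall>x. \<forall>t\<in>T. I x t = I x 0 \<and>
           sigma (I x t) (J x t) (g x t) = sigma (I x 0) (J x 0) (g x 0)"
proof (intro allI ballI)
  fix x t
  assume "t \<in> T"
  interpret canonical_family T "J1 x" "J2 x" "g x" "b x" "I x" "J x" "K x"
    using assms(3-5,7,8) by unfold_locales auto
  show "I x t = I x 0 \<and> sigma (I x t) (J x t) (g x t) = sigma (I x 0) (J x 0) (g x 0)"
    using constant_if_stationary[OF assms(1) I_stationary \<open>t \<in> T\<close> assms(2)]
      constant_if_stationary[OF assms(1) sigma_stationary[OF assms(1)] \<open>t \<in> T\<close> assms(2)]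
    by blast
qed

end
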